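(* Let $n\ge 4$ and let $G$ be a labeled star graph $K_{1,n-1}$ with vertex set $[n]$ (with any labeling). Then $X(G;\mathbf{x},q)$ is not symmetric.
   Context: A labeled graph is a finite simple graph with vertex set $[n]$. A proper coloring is $c\colon[n]\to\{1,2,\dots\}$ with adjacent vertices colored differently; $\operatorname{asc}(c)=\#\{ij\in E: i<j,\ c(i)<c(j)\}$. The CQF is $X(G;\mathbf{x},q)=\sum_{c \text{ proper}} x_{c(1)}\cdots x_{c(n)}q^{\operatorname{asc}(c)}$; it is symmetric if each coefficient of $q^k$ is a symmetric function. *)

theory Defs
  imports "HOL-Library.FuncSet"
begin

(* A labeled graph on vertex set [n] = {1..n} is given by its edge set E,
   a set of 2-element subsets of {1..n}. Colors are positive integers. *)

definition proper_col :: "nat \<Rightarrow> nat set set \<Rightarrow> (nat \<Rightarrow> nat) \<Rightarrow> bool" where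
  "proper_col n E c \<longleftrightarrow> c \<in> {1..n} \<rightarrow>\<^sub>E {1..} \<and>
     (\<forall>i j. {i, j} \<in> E \<longrightarrow> i \<noteq> j \<longrightarrow> c i \<noteq> c j)"

definition asc :: "nat set set \<Rightarrow> (nat \<Rightarrow> nat) \<Rightarrow> nat" where
  "asc E c = card {(i, j). {i, j} \<in> E \<and> i < j \<and> c i < c j}"

(* coefficient of x^alpha q^k in X(G;x,q), where alpha i is the exponent of x_i (i \<ge> 1) *)
definition cqf_coeff :: "nat \<Rightarrow> nat set set \<Rightarrow> (nat \<Rightarrow> nat) \<Rightarrow> nat \<Rightarrow> nat" where
  "cqf_coeff n E \<alpha> k = card {c. proper_col n E c \<and>
      (\<forall>i\<in>{1..}. card {v\<in>{1..n}. c v = i} = \<alpha> i) \<and> asc E c = k}"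

definition cqf_symmetric :: "nat \<Rightarrow> nat set set \<Rightarrow> bool" where
  "cqf_symmetric n E \<longleftrightarrow> (\<forall>k \<alpha> \<sigma>. bij_betw \<sigma> {1..} {1..} \<longrightarrow>
      cqf_coeff n E \<alpha> k = cqf_coeff n E (\<alpha> \<circ> \<sigma>) k)"

definition star_graph :: "nat \<Rightarrow> nat set set \<Rightarrow> bool" where
  "star_graph n E \<longleftrightarrow> (\<exists>v\<in>{1..n}. E = {{v, w} | w. w \<in> {1..n} \<and> w \<noteq> v})"

end

theory Submission
  imports Defs "HOL-Combinatorics.Transposition"
begin

text \<open>
  In a star every proper colouring gives the centre a colour used nowhere else, and the
  ascents are the leaves below the centre with smaller colour plus the leaves above it
  with larger colour. Let the centre \<open>v\<close> have \<open>v - 1\<close> leaves below and \<open>n - v\<close> above.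
  If \<open>n - v \<noteq> v - 1\<close>, then \<open>x\<^sub>1 x\<^sub>2\<^sup>n\<^sup>-\<^sup>1\<close> occurs only with \<open>q\<^sup>n\<^sup>-\<^sup>v\<close> (centre coloured 1),
  but \<open>x\<^sub>1\<^sup>n\<^sup>-\<^sup>1 x\<^sub>2\<close> only with \<open>q\<^sup>v\<^sup>-\<^sup>1\<close> (centre coloured 2). If \<open>n - v = v - 1\<close>, then
  \<open>x\<^sub>1 x\<^sub>2\<^sup>n\<^sup>-\<^sup>2 x\<^sub>3\<close> has the centre coloured 1 or 3, hence only the power \<open>q\<^sup>v\<^sup>-\<^sup>1\<close>, whereas
  \<open>x\<^sub>1\<^sup>n\<^sup>-\<^sup>2 x\<^sub>2 x\<^sub>3\<close> also occurs with \<open>q\<^sup>v\<close>: colour the centre 2 and the leaf \<open>n\<close> with 3.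
  Either way swapping \<open>x\<^sub>1\<close> and \<open>x\<^sub>2\<close> changes a coefficient.
\<close>

abbreviation has_content :: "nat \<Rightarrow> (nat \<Rightarrow> nat) \<Rightarrow> (nat \<Rightarrow> nat) \<Rightarrow> bool" where
  "has_content n c \<alpha> \<equiv> \<forall>i\<in>{1..}. card {v\<in>{1..n}. c v = i} = \<alpha> i"

lemma cqf_symmetric_transpose:
  assumes "cqf_symmetric n E" "a \<ge> 1" "b \<ge> 1"
  shows "cqf_coeff n E (\<alpha> \<circ> transpose a b) k = cqf_coeff n E \<alpha> k"
proof -
  have "bij_betw (transpose a b) {1..} {1..}" using assms(2,3) by simp
  then have "cqf_coeff n E \<alpha> k = cqf_coeff n E (\<alpha> \<circ> transpose a b) k"
    using assms(1) unfolding cqf_symmetric_def by blast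
  then show ?thesis by (rule sym)
qed

lemma content_pos:
  assumes "proper_col n E c" "has_content n c \<alpha>" "w \<in> {1..n}"
  shows "\<alpha> (c w) > 0"
proof -
  have "c w \<ge> 1" using assms(1,3) unfolding proper_col_def by auto
  moreover have "card {u\<in>{1..n}. c u = c w} > 0" using assms(3) by (subst card_gt_0_iff) auto
  ultimately show ?thesis using assms(2) by auto
qed

lemma cqf_coeff_pos:
  assumes "\<forall>i>m. \<alpha> i = 0" "proper_col n E c" "has_content n c \<alpha>" "asc E c = k"
  shows "cqf_coeff n E \<alpha> k > 0"
proof -
  let ?S = "{c. proper_col n E c \<and> has_content n c \<alpha> \<and> asc E c = k}"
  have "?S \<subseteq> {1..n} \<rightarrow>\<^sub>E {1..m}"
  proof
    fix d assume d: "d \<in> ?S"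
    have "d w \<in> {1..m}" if "w \<in> {1..n}" for w
    proof -
      have "d w \<ge> 1" using d that unfolding proper_col_def by auto
      moreover have "\<alpha> (d w) > 0" using d that by (intro content_pos) auto
      then have "d w \<le> m" using assms(1) by (metis leI less_irrefl)
      ultimately show ?thesis by simp
    qed
    then show "d \<in> {1..n} \<rightarrow>\<^sub>E {1..m}" using d unfolding proper_col_def by auto
  qed
  then have "finite ?S" by (rule finite_subset) (simp add: finite_PiE)
  moreover have "c \<in> ?S" using assms(2-4) by blast
  ultimately show ?thesis unfolding cqf_coeff_def by (auto simp: card_gt_0_iff)
qed

lemma cqf_coeff_eq_0:
  assumes "\<And>c. proper_col n E c \<Longrightarrow> has_content n c \<alpha> \<Longrightarrow> asc E c \<noteq> k"
  shows "cqf_coeff n E \<alpha> k = 0"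
proof -
  have "{c. proper_col n E c \<and> has_content n c \<alpha> \<and> asc E c = k} = {}"
    using assms by blast
  then show ?thesis unfolding cqf_coeff_def by (metis card.empty)
qed

locale labelled_star =
  fixes n v :: nat and E :: "nat set set"
  assumes centre: "v \<in> {1..n}"
    and edges: "E = {{v, w} | w. w \<in> {1..n} \<and> w \<noteq> v}"
begin

lemma edge_iff:
  "{i, j} \<in> E \<longleftrightarrow> (i = v \<and> j \<in> {1..n} \<and> j \<noteq> v) \<or> (j = v \<and> i \<in> {1..n} \<and> i \<noteq> v)"
  using edges by (auto simp: doubleton_eq_iff)

lemma asc_eq:
  "asc E c = card {w\<in>{1..n}. w < v \<and> c w < c v} + card {w\<in>{1..n}. v < w \<and> c v < c w}"
proof -
  let ?A = "{w\<in>{1..n}. w < v \<and> c w < c v}" and ?B = "{w\<in>{1..n}. v < w \<and> c v < c w}"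
  have "{(i, j). {i, j} \<in> E \<and> i < j \<and> c i < c j} = (\<lambda>w. (w, v)) ` ?A \<union> (\<lambda>w. (v, w)) ` ?B"
    using edge_iff by auto
  moreover have "card ((\<lambda>w. (w, v)) ` ?A \<union> (\<lambda>w. (v, w)) ` ?B) = card ?A + card ?B"
    by (subst card_Un_disjoint) (auto simp: card_image inj_on_def)
  ultimately show ?thesis unfolding asc_def by simp
qed

lemma proper_col_iff:
  "proper_col n E c \<longleftrightarrow> c \<in> {1..n} \<rightarrow>\<^sub>E {1..} \<and> (\<forall>w\<in>{1..n}. w \<noteq> v \<longrightarrow> c w \<noteq> c v)"
  unfolding proper_col_def edge_iff by (intro conj_cong refl) auto

lemma leaf_colour_ne_centre:
  assumes "proper_col n E c" "w \<in> {1..n}" "w \<noteq> v"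
  shows "c w \<noteq> c v"
  using assms proper_col_iff by blast

lemma centre_content:
  assumes "proper_col n E c" "has_content n c \<alpha>"
  shows "\<alpha> (c v) = 1"
proof -
  have "{w\<in>{1..n}. c w = c v} = {v}"
    using leaf_colour_ne_centre[OF assms(1)] centre by auto
  moreover have "c v \<ge> 1" using assms(1) centre unfolding proper_col_def by auto
  ultimately show ?thesis using assms(2)[rule_format, of "c v"] by simp
qed

lemma card_leaves_below: "card {w\<in>{1..n}. w < v} = v - 1"
proof -
  have "{w\<in>{1..n}. w < v} = {1..<v}" using centre by auto
  then show ?thesis by simp
qed

lemma card_leaves_above: "card {w\<in>{1..n}. v < w} = n - v"
proof -
  have "{w\<in>{1..n}. v < w} = {v<..n}" using centre by auto
  then show ?thesis by simp
qed

lemma asc_centre_min: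
  assumes "\<And>w. w \<in> {1..n} \<Longrightarrow> w \<noteq> v \<Longrightarrow> c v < c w"
  shows "asc E c = n - v"
proof -
  have "{w\<in>{1..n}. w < v \<and> c w < c v} = {}"
    "{w\<in>{1..n}. v < w \<and> c v < c w} = {w\<in>{1..n}. v < w}"
    using assms by fastforce+
  then show ?thesis using asc_eq card_leaves_above by simp
qed

lemma asc_centre_max:
  assumes "\<And>w. w \<in> {1..n} \<Longrightarrow> w \<noteq> v \<Longrightarrow> c w < c v"
  shows "asc E c = v - 1"
proof -
  have "{w\<in>{1..n}. w < v \<and> c w < c v} = {w\<in>{1..n}. w < v}"
    "{w\<in>{1..n}. v < w \<and> c v < c w} = {}"
    using assms by fastforce+
  then show ?thesis using asc_eq card_leaves_below by simp
qed

lemma centre_alone_coeff_pos: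
  "0 < cqf_coeff n E (\<lambda>i. if i = 1 then 1 else if i = 2 then n - 1 else 0) (n - v)"
proof -
  define c :: "nat \<Rightarrow> nat" where
    "c w = (if w \<in> {1..n} then if w = v then 1 else 2 else undefined)" for w
  have "proper_col n E c" unfolding proper_col_iff c_def using centre by auto
  moreover have "{w\<in>{1..n}. c w = i} =
      (if i = 1 then {v} else if i = 2 then {1..n} - {v} else {})" for i
    using centre by (auto simp: c_def)
  then have "has_content n c (\<lambda>i. if i = 1 then 1 else if i = 2 then n - 1 else 0)"
    using centre by simp
  moreover have "asc E c = n - v" by (rule asc_centre_min) (use centre in \<open>simp add: c_def\<close>)
  ultimately show ?thesis by (intro cqf_coeff_pos[of 2]) auto
qed

lemma centre_alone_swapped_coeff_eq_0:
  assumes "n \<ge> 3" "2 * v \<noteq> n + 1"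
  shows "cqf_coeff n E (\<lambda>i. if i = 1 then n - 1 else if i = 2 then 1 else 0) (n - v) = 0"
    (is "cqf_coeff n E ?\<beta> _ = 0")
proof (rule cqf_coeff_eq_0)
  fix d assume d: "proper_col n E d" "has_content n d ?\<beta>"
  have "?\<beta> (d v) = 1" by (rule centre_content[OF d])
  then have centre_2: "d v = 2" using assms(1) by (cases "d v = 1"; cases "d v = 2") auto
  have "d w < d v" if "w \<in> {1..n}" "w \<noteq> v" for w
    using content_pos[OF d that(1)] leaf_colour_ne_centre[OF d(1) that] centre_2
    by (cases "d w = 1"; cases "d w = 2") auto
  then have "asc E d = v - 1" by (rule asc_centre_max)
  then show "asc E d \<noteq> n - v" using assms(2) centre by auto
qed

lemma centre_middle_coeff_pos:
  assumes "v < n"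
  shows "0 < cqf_coeff n E
    (\<lambda>i. if i = 1 then n - 2 else if i = 2 then 1 else if i = 3 then 1 else 0) v"
proof -
  define c :: "nat \<Rightarrow> nat" where
    "c w = (if w \<in> {1..n} then if w = v then 2 else if w = n then 3 else 1 else undefined)" for w
  have "proper_col n E c" unfolding proper_col_iff c_def using centre by auto
  moreover have "{w\<in>{1..n}. c w = i} =
      (if i = 1 then {1..n} - {v, n} else if i = 2 then {v} else if i = 3 then {n} else {})" for i
    using centre assms by (auto simp: c_def)
  then have "has_content n c
      (\<lambda>i. if i = 1 then n - 2 else if i = 2 then 1 else if i = 3 then 1 else 0)"
    using centre assms by (simp add: card_Diff_subset)
  moreover have "asc E c = v"
  proof -
    have "{w\<in>{1..n}. w < v \<and> c w < c v} = {w\<in>{1..n}. w < v}"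
      "{w\<in>{1..n}. v < w \<and> c v < c w} = {n}"
      using centre assms by (auto simp: c_def)
    then show ?thesis using asc_eq card_leaves_below centre by simp
  qed
  ultimately show ?thesis by (intro cqf_coeff_pos[of 3]) auto
qed

lemma centre_end_coeff_eq_0:
  assumes "n \<ge> 4" "n \<noteq> 2 * v"
  shows "cqf_coeff n E
    (\<lambda>i. if i = 1 then 1 else if i = 2 then n - 2 else if i = 3 then 1 else 0) v = 0"
    (is "cqf_coeff n E ?\<alpha> _ = 0")
proof (rule cqf_coeff_eq_0)
  fix d assume d: "proper_col n E d" "has_content n d ?\<alpha>"
  have "?\<alpha> (d v) = 1" by (rule centre_content[OF d])
  then have centre_colour: "d v = 1 \<or> d v = 3"
    using assms(1) by (cases "d v = 1"; cases "d v = 2"; cases "d v = 3") auto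
  have leaf: "d w \<in> {1, 2, 3} - {d v}" if "w \<in> {1..n}" "w \<noteq> v" for w
    using content_pos[OF d that(1)] leaf_colour_ne_centre[OF d(1) that]
    by (cases "d w = 1"; cases "d w = 2"; cases "d w = 3") auto
  from centre_colour show "asc E d \<noteq> v"
  proof
    assume "d v = 1"
    then have "asc E d = n - v" using leaf by (intro asc_centre_min) fastforce
    then show ?thesis using assms(2) by auto
  next
    assume "d v = 3"
    then have "asc E d = v - 1" using leaf by (intro asc_centre_max) fastforce
    then show ?thesis using centre by auto
  qed
qed

end

theorem proposition5p2:
  fixes n :: nat and E :: "nat set set"
  assumes "n \<ge> 4" and "star_graph n E"
  shows "\<not> cqf_symmetric n E"
proof
  assume sym: "cqf_symmetric n E"
  obtain v where "labelled_star n v E"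
    using assms(2) unfolding star_graph_def labelled_star_def by auto
  then interpret labelled_star n v E .
  have swap: "cqf_coeff n E \<beta> k = cqf_coeff n E \<alpha> k"
    if "\<beta> = \<alpha> \<circ> transpose 1 2" for \<alpha> \<beta> k
    using cqf_symmetric_transpose[OF sym, of 1 2] that by simp
  show False
  proof (cases "2 * v = n + 1")
    case False
    then show False
      using swap[of _ "\<lambda>i. if i = 1 then 1 else if i = 2 then n - 1 else 0" "n - v"]
        centre_alone_coeff_pos centre_alone_swapped_coeff_eq_0 assms(1)
      by (simp add: fun_eq_iff transpose_def)
  next
    case True
    then have "v < n" "n \<noteq> 2 * v" using assms(1) by auto
    then show False
      using swap[of _ "\<lambda>i. if i = 1 then 1 else if i = 2 then n - 2 else if i = 3 then 1 else 0" v]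
        centre_middle_coeff_pos centre_end_coeff_eq_0 assms(1)
      by (simp add: fun_eq_iff transpose_def)
  qed
qed

end
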